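(* Let $\gamma\in\mathcal{M}_k\otimes\mathcal{M}_m$ be a state and $W\in\mathcal{M}_k$ an orthogonal projection. Then $F_\gamma\circ G_\gamma(W\mathcal{M}_kW)\subseteq W\mathcal{M}_kW$ if and only if there is an orthogonal projection $V\in\mathcal{M}_m$ such that $\mathrm{tr}(\gamma(W\otimes V^\perp))=\mathrm{tr}(\gamma(W^\perp\otimes V))=0$.
   Context: $\mathcal{M}_k$ denotes the complex $k\times k$ matrices, and $\mathcal{M}_k\otimes\mathcal{M}_m$ is identified with $\mathcal{M}_{km}$ via the Kronecker product. A state is a positive semidefinite Hermitian matrix (not necessarily of trace one). For an orthogonal projection $W$, $W^\perp=\mathrm{Id}-W$, and $W\mathcal{M}_kW=\{WXW:X\in\mathcal{M}_k\}$. For $\gamma=\sum_{i=1}^n A_i\otimes B_i\in\mathcal{M}_k\otimes\mathcal{M}_m$ define $G_\gamma:\mathcal{M}_k\to\mathcal{M}_m$, $G_\gamma(X)=\sum_i\mathrm{tr}(A_iX)B_i$, and $F_\gamma:\mathcal{M}_m\to\mathcal{M}_k$, $F_\gamma(Y)=\sum_i\mathrm{tr}(B_iY)A_i$ (independent of the chosen decomposition). *)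

theory Defs
  imports "HOL-Analysis.Analysis"
begin

text \<open>Matrices in M_k are complex^'k^'k for a finite index type 'k.
  M_k tensor M_m is identified with matrices indexed by 'k \<times> 'm via the Kronecker product.\<close>

definition kron :: "complex^'k^'k \<Rightarrow> complex^'m^'m \<Rightarrow> complex^('k\<times>'m)^('k\<times>'m)" where
  "kron A B = (\<chi> p q. A $ fst p $ fst q * B $ snd p $ snd q)"

definition adjoint_mat :: "complex^'n^'n \<Rightarrow> complex^'n^'n" where
  "adjoint_mat A = (\<chi> i j. cnj (A $ j $ i))"

definition hermitian_mat :: "complex^'n^'n \<Rightarrow> bool" where
  "hermitian_mat A \<longleftrightarrow> adjoint_mat A = A"

text \<open>A state: positive semidefinite Hermitian matrix (trace not normalized).\<close>
definition is_state :: "complex^'n^'n \<Rightarrow> bool" where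
  "is_state A \<longleftrightarrow> hermitian_mat A \<and>
     (\<forall>x :: complex^'n. 0 \<le> Re (\<Sum>i\<in>UNIV. \<Sum>j\<in>UNIV. cnj (x $ i) * A $ i $ j * x $ j))"

definition orth_proj :: "complex^'n^'n \<Rightarrow> bool" where
  "orth_proj P \<longleftrightarrow> P ** P = P \<and> adjoint_mat P = P"

definition perp :: "complex^'n^'n \<Rightarrow> complex^'n^'n" where
  "perp W = mat 1 - W"

definition compression :: "complex^'n^'n \<Rightarrow> (complex^'n^'n) set" where
  "compression W = {W ** X ** W | X. True}"

definition is_decomp :: "complex^('k\<times>'m)^('k\<times>'m) \<Rightarrow> ((complex^'k^'k) \<times> (complex^'m^'m)) list \<Rightarrow> bool" where
  "is_decomp \<gamma> ds \<longleftrightarrow> \<gamma> = sum_list (map (\<lambda>(A, B). kron A B) ds)"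

definition G_map :: "complex^('k\<times>'m)^('k\<times>'m) \<Rightarrow> complex^'k^'k \<Rightarrow> complex^'m^'m" where
  "G_map \<gamma> X = (let ds = (SOME ds. is_decomp \<gamma> ds) in
     sum_list (map (\<lambda>(A, B). (\<chi> i j. trace (A ** X) * B $ i $ j)) ds))"

definition F_map :: "complex^('k\<times>'m)^('k\<times>'m) \<Rightarrow> complex^'m^'m \<Rightarrow> complex^'k^'k" where
  "F_map \<gamma> Y = (let ds = (SOME ds. is_decomp \<gamma> ds) in
     sum_list (map (\<lambda>(A, B). (\<chi> i j. trace (B ** Y) * A $ i $ j)) ds))"

end

theory Submission
  imports Defs
begin

text \<open>
  Write the state as a Gram sum \<open>\<gamma> = \<Sum>\<^sub>r |v\<^sub>r\<rangle>\<langle>v\<^sub>r|\<close> (Cholesky elimination). If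
  \<open>tr (\<gamma> (P \<otimes> Q)) = 0\<close> for projections \<open>P\<close>, \<open>Q\<close>, then every \<open>v\<^sub>r\<close> is killed by \<open>P \<otimes> Q\<close>, so
  \<open>\<gamma>\<close> annihilates \<open>P \<otimes> Q\<close> from both sides.

  If the traces in the theorem vanish, then compressing \<open>\<gamma>\<close> by \<open>W \<otimes> 1\<close> or by \<open>1 \<otimes> V\<close>
  gives the same matrix \<open>(W \<otimes> V) \<gamma> (W \<otimes> V)\<close>; hence \<open>G\<^sub>\<gamma>\<close> maps \<open>W M\<^sub>k W\<close> into \<open>V M\<^sub>m V\<close>
  and \<open>F\<^sub>\<gamma>\<close> maps \<open>V M\<^sub>m V\<close> into \<open>W M\<^sub>k W\<close>.

  Conversely, \<open>F\<^sub>\<gamma>(G\<^sub>\<gamma>(W)) \<in> W M\<^sub>k W\<close> gives \<open>tr (\<gamma> (W\<^sup>\<perp> \<otimes> G\<^sub>\<gamma>(W))) = 0\<close>. Now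
  \<open>G\<^sub>\<gamma>(W)\<close> is the Gram sum of the slices \<open>(\<langle>w\<^sub>l| \<otimes> 1) v\<^sub>r\<close>, \<open>w\<^sub>l\<close> the columns of \<open>W\<close>, so
  the vectors \<open>v\<^sub>r\<close> are orthogonal to \<open>W\<^sup>\<perp>\<close> tensored with these slices. The projection
  \<open>V\<close> onto the span of the slices (Gram--Schmidt) then satisfies
  \<open>(W \<otimes> V\<^sup>\<perp>) v\<^sub>r = 0 = (W\<^sup>\<perp> \<otimes> V) v\<^sub>r\<close>.
\<close>

section \<open>Inner products and rank-one matrices\<close>

definition cinner :: "complex^'n \<Rightarrow> complex^'n \<Rightarrow> complex" where
  "cinner x y = (\<Sum>i\<in>UNIV. cnj (x$i) * y$i)"

definition outer :: "complex^'n \<Rightarrow> complex^'n \<Rightarrow> complex^'n^'n" where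
  "outer u w = (\<chi> i j. u$i * cnj (w$j))"

lemma cinner_commute: "cinner y x = cnj (cinner x y)"
  by (simp add: cinner_def mult.commute)

lemma cinner_add_left: "cinner (x + y) z = cinner x z + cinner y z"
  by (simp add: cinner_def algebra_simps sum.distrib)

lemma cinner_add_right: "cinner x (y + z) = cinner x y + cinner x z"
  by (simp add: cinner_def algebra_simps sum.distrib)

lemma cinner_diff_left: "cinner (x - y) z = cinner x z - cinner y z"
  by (simp add: cinner_def algebra_simps sum_subtractf)

lemma cinner_diff_right: "cinner x (y - z) = cinner x y - cinner x z"
  by (simp add: cinner_def algebra_simps sum_subtractf)

lemma cinner_scale_left: "cinner (c *s x) y = cnj c * cinner x y"
  by (simp add: cinner_def algebra_simps sum_distrib_left)

lemma cinner_scale_right: "cinner x (c *s y) = c * cinner x y"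
  by (simp add: cinner_def algebra_simps sum_distrib_left)

lemma cinner_zero_left [simp]: "cinner 0 x = 0"
  by (simp add: cinner_def)

lemma cinner_zero_right [simp]: "cinner x 0 = 0"
  by (simp add: cinner_def)

lemma cinner_sum_right: "cinner x (sum f S) = (\<Sum>s\<in>S. cinner x (f s))"
  by (induction S rule: infinite_finite_induct) (simp_all add: cinner_add_right)

lemma cinner_self: "cinner x x = of_real (\<Sum>i\<in>UNIV. (cmod (x$i))\<^sup>2)"
  unfolding cinner_def of_real_sum
  by (rule sum.cong, simp, subst complex_norm_square, rule mult.commute)

lemma cinner_self_eq_0: "cinner x x = 0 \<longleftrightarrow> x = 0"
  unfolding cinner_self of_real_eq_0_iff by (simp add: sum_nonneg_eq_0_iff vec_eq_iff)

lemma Re_cinner_self_pos: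
  assumes "x \<noteq> 0" shows "0 < Re (cinner x x)"
proof -
  have Re: "Re (cinner x x) = (\<Sum>i\<in>UNIV. (cmod (x$i))\<^sup>2)"
    unfolding cinner_self by (simp only: Re_complex_of_real)
  have "cinner x x = of_real (Re (cinner x x))"
    unfolding Re by (rule cinner_self)
  then have "Re (cinner x x) \<noteq> 0"
    using assms cinner_self_eq_0 by force
  then show ?thesis unfolding Re by (simp add: less_le sum_nonneg)
qed

lemma cinner_axis_left: "cinner (axis p 1) x = x$p"
  by (simp add: cinner_def axis_def if_distrib if_distribR cong: if_cong)

lemma matrix_vector_mult_axis: "A *v axis p 1 = column p A"
  by (simp add: matrix_vector_mult_def column_def axis_def vec_eq_iff if_distrib if_distribR cong: if_cong)

lemma matrix_add_rdistrib: "(A + B) ** (C::'a::semiring_1^'n^'m) = A ** C + B ** C"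
  by (simp add: matrix_matrix_mult_def vec_eq_iff distrib_right sum.distrib)

lemma matrix_diff_ldistrib: "(A::'a::ring_1^'n^'m) ** (B - C) = A ** B - A ** C"
  by (simp add: matrix_matrix_mult_def vec_eq_iff algebra_simps sum_subtractf)

lemma matrix_diff_rdistrib: "(A - B) ** (C::'a::ring_1^'n^'m) = A ** C - B ** C"
  by (simp add: matrix_matrix_mult_def vec_eq_iff algebra_simps sum_subtractf)

lemma matrix_mult_sum_left: "sum f S ** (A::'a::semiring_1^'n^'m) = (\<Sum>s\<in>S. f s ** A)"
  by (simp add: matrix_matrix_mult_def vec_eq_iff sum_component sum_distrib_right) (intro allI sum.swap)

lemma matrix_mult_sum_right: "(A::'a::semiring_1^'n^'m) ** sum f S = (\<Sum>s\<in>S. A ** f s)"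
  by (simp add: matrix_matrix_mult_def vec_eq_iff sum_component sum_distrib_left) (intro allI sum.swap)

lemma matrix_vector_mult_sum_left: "sum f S *v x = (\<Sum>s\<in>S. f s *v x)"
  by (simp add: matrix_vector_mult_def vec_eq_iff sum_component sum_distrib_right) (intro allI sum.swap)

lemma trace_sum: "trace (sum f S) = (\<Sum>s\<in>S. trace (f s))"
  by (simp add: trace_def sum_component) (rule sum.swap)

lemma cinner_matrix_vector_mult: "cinner x (A *v y) = cinner (adjoint_mat A *v x) y"
proof -
  have "cinner x (A *v y) = (\<Sum>i\<in>UNIV. \<Sum>j\<in>UNIV. cnj (x$i) * A$i$j * y$j)"
    by (simp add: cinner_def matrix_vector_mult_def sum_distrib_left algebra_simps)
  also have "\<dots> = (\<Sum>j\<in>UNIV. \<Sum>i\<in>UNIV. cnj (x$i) * A$i$j * y$j)"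
    by (rule sum.swap)
  also have "\<dots> = cinner (adjoint_mat A *v x) y"
    by (simp add: cinner_def matrix_vector_mult_def adjoint_mat_def sum_distrib_left mult_ac)
  finally show ?thesis .
qed

lemma outer_zero_left [simp]: "outer 0 w = 0"
  and outer_zero_right [simp]: "outer u 0 = 0"
  by (simp_all add: outer_def vec_eq_iff)

lemma outer_mult_vec: "outer u w *v x = cinner w x *s u"
  by (simp add: outer_def matrix_vector_mult_def cinner_def vec_eq_iff sum_distrib_left algebra_simps)

lemma matrix_mult_outer: "A ** outer u w = outer (A *v u) w"
  by (simp add: outer_def matrix_matrix_mult_def matrix_vector_mult_def vec_eq_iff
      sum_distrib_left sum_distrib_right mult_ac)

lemma outer_mult_matrix: "outer u w ** A = outer u (adjoint_mat A *v w)"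
  by (simp add: outer_def matrix_matrix_mult_def matrix_vector_mult_def adjoint_mat_def vec_eq_iff
      sum_distrib_left algebra_simps)

lemma trace_outer_mult: "trace (outer u u ** A) = cinner u (A *v u)"
proof -
  have "trace (outer u u ** A) = (\<Sum>i\<in>UNIV. \<Sum>j\<in>UNIV. u$i * cnj (u$j) * A$j$i)"
    by (simp add: trace_def outer_def matrix_matrix_mult_def)
  also have "\<dots> = (\<Sum>j\<in>UNIV. \<Sum>i\<in>UNIV. u$i * cnj (u$j) * A$j$i)"
    by (rule sum.swap)
  also have "\<dots> = cinner u (A *v u)"
    by (simp add: cinner_def matrix_vector_mult_def sum_distrib_left algebra_simps)
  finally show ?thesis .
qed

lemma hermitian_cnj_entry: "hermitian_mat A \<Longrightarrow> cnj (A$i$j) = A$j$i"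
  unfolding hermitian_mat_def adjoint_mat_def by (metis vec_lambda_beta)

lemma hermitian_cinner_mult: "hermitian_mat A \<Longrightarrow> cinner x (A *v y) = cinner (A *v x) y"
  unfolding hermitian_mat_def by (metis cinner_matrix_vector_mult)

lemma hermitian_mult_vec_nth: "hermitian_mat P \<Longrightarrow> (P *v x)$i = cinner (column i P) x"
  by (simp add: matrix_vector_mult_def cinner_def column_def hermitian_cnj_entry)

lemma trace_gram_mult_gram:
  "trace ((\<Sum>r\<in>R. outer (v r) (v r)) ** (\<Sum>s\<in>S. outer (x s) (x s)))
     = of_real (\<Sum>r\<in>R. \<Sum>s\<in>S. (cmod (cinner (x s) (v r)))\<^sup>2)"
proof -
  have "trace (outer (v r) (v r) ** outer (x s) (x s)) = of_real ((cmod (cinner (x s) (v r)))\<^sup>2)"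
    for r s
    unfolding complex_norm_square
    by (simp add: trace_outer_mult outer_mult_vec cinner_scale_right cinner_commute[of "v r"])
  then show ?thesis
    by (simp add: matrix_mult_sum_left matrix_mult_sum_right trace_sum of_real_sum) (rule sum.swap)
qed

lemma cinner_eq_0_if_trace_gram_mult_gram_eq_0:
  assumes "finite R" "finite S"
    and "trace ((\<Sum>r\<in>R. outer (v r) (v r)) ** (\<Sum>s\<in>S. outer (x s) (x s))) = 0"
    and "r \<in> R" "s \<in> S"
  shows "cinner (x s) (v r) = 0"
proof -
  have "of_real (\<Sum>r\<in>R. \<Sum>s\<in>S. (cmod (cinner (x s) (v r)))\<^sup>2) = (0::complex)"
    using assms(3) unfolding trace_gram_mult_gram .
  then have "(\<Sum>r\<in>R. \<Sum>s\<in>S. (cmod (cinner (x s) (v r)))\<^sup>2) = 0"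
    by (simp only: of_real_eq_0_iff)
  then show ?thesis
    using assms by (simp add: sum_nonneg sum_nonneg_eq_0_iff)
qed

lemma gram_mult_eq_0:
  assumes "hermitian_mat M" and "\<And>r. r \<in> R \<Longrightarrow> M *v v r = 0"
  shows "(\<Sum>r\<in>R. outer (v r) (v r)) ** M = 0"
  using assms unfolding hermitian_mat_def
  by (simp add: matrix_mult_sum_left outer_mult_matrix)

section \<open>Gram decomposition of states\<close>

lemma is_state_iff: "is_state A \<longleftrightarrow> hermitian_mat A \<and> (\<forall>x. 0 \<le> Re (cinner x (A *v x)))"
  by (simp add: is_state_def cinner_def matrix_vector_mult_def sum_distrib_left mult.assoc)

lemma state_row_eq_0_if_diag_eq_0:
  assumes st: "is_state A" and App: "A$p$p = 0"
  shows "A$p = 0"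
proof (rule ccontr)
  assume "A$p \<noteq> 0"
  then obtain q where a: "A$p$q \<noteq> 0" by (auto simp: vec_eq_iff)
  have H: "hermitian_mat A" using st by (simp add: is_state_iff)
  define s where "s = (Re (A$q$q) + 1) / (2 * (cmod (A$p$q))\<^sup>2)"
  define t where "t = - of_real s * A$p$q"
  define x where "x = t *s axis p 1 + axis q 1"
  have "cinner x (A *v x) = cnj t * A$p$q + t * cnj (A$p$q) + A$q$q"
    unfolding x_def using App hermitian_cnj_entry[OF H, of p q]
    by (simp add: matrix_vector_right_distrib vec.scale cinner_add_left cinner_add_right
        cinner_scale_left cinner_scale_right matrix_vector_mult_axis cinner_axis_left column_def
        algebra_simps)
  also have "\<dots> = A$q$q - 2 * of_real s * of_real ((cmod (A$p$q))\<^sup>2)"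
    unfolding t_def complex_norm_square by (simp add: algebra_simps)
  finally have "Re (cinner x (A *v x)) = Re (A$q$q) - 2 * s * (cmod (A$p$q))\<^sup>2"
    by simp
  also have "\<dots> = -1"
    using a unfolding s_def by (simp add: field_simps)
  finally have "Re (cinner x (A *v x)) < 0"
    by simp
  then show False
    using st by (simp add: is_state_iff not_le[symmetric])
qed

lemma cinner_subtract_pivot:
  fixes A :: "complex^'n^'n" and x :: "complex^'n"
  assumes H: "hermitian_mat A" and App: "A$p$p = of_real d" and "0 < d"
  defines "v \<equiv> (\<chi> q. A$q$p / of_real (sqrt d))"
    and "y \<equiv> x - ((A *v x)$p / of_real d) *s axis p 1"
  shows "cinner x ((A - outer v v) *v x) = cinner y (A *v y)"
proof -
  define s where "s = (A *v x)$p"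
  have "cinner v x = s / of_real (sqrt d)"
    by (simp add: cinner_def v_def s_def matrix_vector_mult_def hermitian_cnj_entry[OF H]
        sum_divide_distrib)
  then have "cinner x ((A - outer v v) *v x) = cinner x (A *v x) - cnj s * s / of_real d"
    using \<open>0 < d\<close>
    by (simp add: matrix_vector_mult_diff_rdistrib outer_mult_vec cinner_diff_right
        cinner_scale_right cinner_commute[of x v] flip: of_real_mult)
  also have "\<dots> = cinner y (A *v y)"
  proof -
    have "cinner (axis p 1) (A *v x) = s" by (simp add: cinner_axis_left s_def)
    moreover have "cinner x (A *v axis p 1) = cnj s"
      by (metis hermitian_cinner_mult[OF H] cinner_commute calculation)
    ultimately have "cinner y (A *v y) = cinner x (A *v x) - (s / of_real d) * cnj s
        - cnj (s / of_real d) * s + cnj (s / of_real d) * (s / of_real d) * of_real d"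
      by (simp add: y_def s_def[symmetric] matrix_vector_mult_diff_distrib vec.scale
          cinner_diff_left cinner_diff_right cinner_scale_left cinner_scale_right
          matrix_vector_mult_axis column_def cinner_axis_left App)
    moreover have "cnj (s / of_real d) * (s / of_real d) * of_real d = cnj s * s / of_real d"
      using \<open>0 < d\<close> by simp
    moreover have "s / of_real d * cnj s = cnj s * s / of_real d"
      and "cnj (s / of_real d) * s = cnj s * s / of_real d"
      by simp_all
    ultimately show ?thesis
      by simp
  qed
  finally show ?thesis .
qed

lemma state_subtract_rank_one:
  assumes st: "is_state A" and App: "A$p$p \<noteq> 0"
  obtains v where "is_state (A - outer v v)" and "(A - outer v v)$p = 0"
    and "\<And>q. A$q = 0 \<Longrightarrow> (A - outer v v)$q = 0"
proof -
  have H: "hermitian_mat A" using st by (simp add: is_state_iff)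
  define d where "d = Re (A$p$p)"
  have App_d: "A$p$p = of_real d"
    using arg_cong[OF hermitian_cnj_entry[OF H, of p p], of Im] by (simp add: complex_eq_iff d_def)
  have "0 \<le> Re (cinner (axis p 1) (A *v axis p 1))"
    using st by (simp add: is_state_iff)
  then have "0 < d"
    using App App_d by (simp add: matrix_vector_mult_axis cinner_axis_left column_def less_le)
  define v :: "complex^_" where "v = (\<chi> q. A$q$p / of_real (sqrt d))"
  have outer_v: "outer v v $ q $ r = A$q$p * A$p$r / of_real d" for q r
    using \<open>0 < d\<close> by (simp add: outer_def v_def hermitian_cnj_entry[OF H] flip: of_real_mult)
  show ?thesis
  proof (rule that)
    have "hermitian_mat (A - outer v v)"
      unfolding hermitian_mat_def adjoint_mat_def
      by (simp add: vec_eq_iff outer_v hermitian_cnj_entry[OF H] mult.commute)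
    moreover have "0 \<le> Re (cinner x ((A - outer v v) *v x))" for x
      unfolding v_def cinner_subtract_pivot[OF H App_d \<open>0 < d\<close>]
      using st by (simp add: is_state_iff)
    ultimately show "is_state (A - outer v v)" by (simp add: is_state_iff)
    show "(A - outer v v)$p = 0"
      using \<open>0 < d\<close> by (simp add: vec_eq_iff outer_v App_d)
    show "(A - outer v v)$q = 0" if "A$q = 0" for q
      using that by (simp add: vec_eq_iff outer_v)
  qed
qed

lemma state_gram_decomposition:
  "is_state A \<Longrightarrow> \<exists>(n::nat) v. A = (\<Sum>r<n. outer (v r) (v r))"
proof (induction "card {p. A$p \<noteq> 0}" arbitrary: A rule: less_induct)
  case less
  show ?case
  proof (cases "A = 0")
    case True
    then show ?thesis by (intro exI[of _ "0::nat"]) simp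
  next
    case False
    then obtain p where "A$p \<noteq> 0" by (auto simp: vec_eq_iff)
    then have "A$p$p \<noteq> 0" using state_row_eq_0_if_diag_eq_0[OF less.prems] by blast
    then obtain v where st: "is_state (A - outer v v)" and row_p: "(A - outer v v)$p = 0"
      and rows: "\<And>q. A$q = 0 \<Longrightarrow> (A - outer v v)$q = 0"
      using state_subtract_rank_one[OF less.prems] by blast
    have "{q. (A - outer v v)$q \<noteq> 0} \<subset> {q. A$q \<noteq> 0}"
      using row_p rows \<open>A$p \<noteq> 0\<close> by blast
    then have "card {q. (A - outer v v)$q \<noteq> 0} < card {q. A$q \<noteq> 0}"
      by (rule psubset_card_mono[rotated]) simp
    then obtain n w where "A - outer v v = (\<Sum>r<(n::nat). outer (w r) (w r))"
      using less.hyps st by blast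
    then have "A = (\<Sum>r<Suc n. outer ((w(n := v)) r) ((w(n := v)) r))"
      by (simp add: algebra_simps)
    then show ?thesis by blast
  qed
qed

section \<open>Tensor products\<close>

definition tensor :: "complex^'k \<Rightarrow> complex^'m \<Rightarrow> complex^('k \<times> 'm)" where
  "tensor a c = (\<chi> p. a$fst p * c$snd p)"

text \<open>\<open>partial_cinner y u\<close> is \<open>(\<langle>y| \<otimes> 1) u\<close>.\<close>

definition partial_cinner :: "complex^'k \<Rightarrow> complex^('k \<times> 'm) \<Rightarrow> complex^'m" where
  "partial_cinner y u = (\<chi> b. \<Sum>i\<in>UNIV. cnj (y$i) * u$(i, b))"

lemma sum_UNIV_prod:
  "(\<Sum>p\<in>(UNIV :: ('a::finite \<times> 'b::finite) set). f p) = (\<Sum>i\<in>UNIV. \<Sum>b\<in>UNIV. f (i, b))"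
  by (simp add: sum.cartesian_product)

lemma cinner_partial_cinner: "cinner e (partial_cinner y u) = cinner (tensor y e) u"
proof -
  have "cinner e (partial_cinner y u) = (\<Sum>b\<in>UNIV. \<Sum>i\<in>UNIV. cnj (e$b) * cnj (y$i) * u$(i, b))"
    by (simp add: cinner_def partial_cinner_def sum_distrib_left mult.assoc)
  also have "\<dots> = (\<Sum>i\<in>UNIV. \<Sum>b\<in>UNIV. cnj (e$b) * cnj (y$i) * u$(i, b))"
    by (rule sum.swap)
  also have "\<dots> = cinner (tensor y e) u"
    by (simp add: cinner_def tensor_def sum_UNIV_prod mult_ac)
  finally show ?thesis .
qed

lemma kron_mult: "kron A B ** kron C D = kron (A ** C) (B ** D)"
  by (simp add: kron_def matrix_matrix_mult_def vec_eq_iff sum_UNIV_prod sum_product algebra_simps)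

lemma adjoint_kron: "adjoint_mat (kron A B) = kron (adjoint_mat A) (adjoint_mat B)"
  by (simp add: kron_def adjoint_mat_def vec_eq_iff)

lemma kron_diff_left: "kron (A - B) C = kron A C - kron B C"
  by (simp add: kron_def vec_eq_iff algebra_simps)

lemma kron_diff_right: "kron A (B - C) = kron A B - kron A C"
  by (simp add: kron_def vec_eq_iff algebra_simps)

lemma kron_sum_left: "kron (sum f S) B = (\<Sum>s\<in>S. kron (f s) B)"
  by (simp add: kron_def vec_eq_iff sum_component sum_distrib_right)

lemma kron_sum_right: "kron A (sum f S) = (\<Sum>s\<in>S. kron A (f s))"
  by (simp add: kron_def vec_eq_iff sum_component sum_distrib_left)

lemma kron_outer: "kron (outer a b) (outer c d) = outer (tensor a c) (tensor b d)"
  by (simp add: kron_def outer_def tensor_def vec_eq_iff algebra_simps)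

lemma kron_gram:
  "kron (\<Sum>i\<in>I. outer (a i) (a i)) (\<Sum>j\<in>J. outer (c j) (c j))
     = (\<Sum>p\<in>I \<times> J. outer (tensor (a (fst p)) (c (snd p))) (tensor (a (fst p)) (c (snd p))))"
  unfolding kron_sum_left kron_sum_right kron_outer
  by (subst sum.swap) (simp add: sum.cartesian_product case_prod_beta)

lemma kron_mult_vec_nth:
  assumes "hermitian_mat A"
  shows "(kron A B *v u)$(i, b) = (B *v partial_cinner (column i A) u)$b"
proof -
  have "(kron A B *v u)$(i, b) = (\<Sum>j\<in>UNIV. \<Sum>c\<in>UNIV. A$i$j * B$b$c * u$(j, c))"
    by (simp add: kron_def matrix_vector_mult_def sum_UNIV_prod)
  also have "\<dots> = (\<Sum>c\<in>UNIV. \<Sum>j\<in>UNIV. A$i$j * B$b$c * u$(j, c))"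
    by (rule sum.swap)
  also have "\<dots> = (B *v partial_cinner (column i A) u)$b"
    by (simp add: matrix_vector_mult_def partial_cinner_def column_def
        hermitian_cnj_entry[OF assms] sum_distrib_left mult_ac)
  finally show ?thesis .
qed

lemma kron_mult_vec_eq_0_iff:
  "hermitian_mat A \<Longrightarrow> kron A B *v u = 0 \<longleftrightarrow> (\<forall>i. B *v partial_cinner (column i A) u = 0)"
  by (auto simp: vec_eq_iff kron_mult_vec_nth)

section \<open>Orthogonal projections\<close>

lemma orth_proj_hermitian: "orth_proj P \<Longrightarrow> hermitian_mat P"
  by (simp add: orth_proj_def hermitian_mat_def)

lemma orth_proj_perp:
  assumes "orth_proj P" shows "orth_proj (perp P)"
proof -
  have PP: "P ** P = P" and H: "hermitian_mat P"
    using assms by (simp_all add: orth_proj_def orth_proj_hermitian)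
  have "(mat 1 - P) ** (mat 1 - P) = mat 1 - P"
    by (simp add: matrix_diff_ldistrib matrix_diff_rdistrib PP)
  moreover have "adjoint_mat (mat 1 - P) = mat 1 - P"
    by (simp add: adjoint_mat_def vec_eq_iff mat_def hermitian_cnj_entry[OF H])
  ultimately show ?thesis by (simp add: orth_proj_def perp_def)
qed

lemma orth_proj_kron: "orth_proj A \<Longrightarrow> orth_proj B \<Longrightarrow> orth_proj (kron A B)"
  by (simp add: orth_proj_def kron_mult adjoint_kron)

lemma orth_proj_gram_columns:
  assumes "orth_proj P" shows "P = (\<Sum>i\<in>UNIV. outer (column i P) (column i P))"
proof -
  have H: "hermitian_mat P" using assms by (rule orth_proj_hermitian)
  have "(P ** P)$a$b = (\<Sum>i\<in>UNIV. outer (column i P) (column i P))$a$b" for a b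
    by (simp add: matrix_matrix_mult_def outer_def column_def sum_component
        hermitian_cnj_entry[OF H])
  then show ?thesis
    using assms by (simp add: orth_proj_def vec_eq_iff)
qed

lemma orth_proj_mult_vec_eq_0_if_trace_eq_0:
  assumes "finite R" and P: "orth_proj P"
    and "trace ((\<Sum>r\<in>R. outer (v r) (v r)) ** P) = 0" and "r \<in> R"
  shows "P *v v r = 0"
proof -
  have "cinner (column i P) (v r) = 0" for i
    using cinner_eq_0_if_trace_gram_mult_gram_eq_0[of R UNIV v "\<lambda>i. column i P"] assms
    by (simp flip: orth_proj_gram_columns[OF P])
  then show ?thesis
    by (simp add: vec_eq_iff hermitian_mult_vec_nth[OF orth_proj_hermitian[OF P]])
qed

lemma state_orth_proj_mult_eq_0_if_trace_eq_0:
  assumes "is_state \<gamma>" and P: "orth_proj P" and "trace (\<gamma> ** P) = 0"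
  shows "\<gamma> ** P = 0" and "P ** \<gamma> = 0"
proof -
  obtain n v where \<gamma>: "\<gamma> = (\<Sum>r<(n::nat). outer (v r) (v r))"
    using state_gram_decomposition[OF assms(1)] by blast
  have Pv: "P *v v r = 0" if "r \<in> {..<n}" for r
    using orth_proj_mult_vec_eq_0_if_trace_eq_0[of "{..<n}" P v r] assms that by (simp add: \<gamma>)
  show "\<gamma> ** P = 0"
    unfolding \<gamma> using orth_proj_hermitian[OF P] Pv by (rule gram_mult_eq_0)
  show "P ** \<gamma> = 0"
    unfolding \<gamma> using Pv by (simp add: matrix_mult_sum_right matrix_mult_outer)
qed

definition orthonormal :: "(complex^'n) set \<Rightarrow> bool" where
  "orthonormal E \<longleftrightarrow> (\<forall>e\<in>E. cinner e e = 1) \<and> (\<forall>e\<in>E. \<forall>f\<in>E. e \<noteq> f \<longrightarrow> cinner e f = 0)"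

lemma orthonormal_cinner:
  "orthonormal E \<Longrightarrow> e \<in> E \<Longrightarrow> f \<in> E \<Longrightarrow> cinner e f = (if e = f then 1 else 0)"
  by (simp add: orthonormal_def)

lemma orthonormal_sum_cinner:
  assumes "orthonormal E" "finite E" "f \<in> E"
  shows "(\<Sum>e\<in>E. c e * cinner f e) = c f"
  using assms by (simp add: orthonormal_cinner if_distrib cong: if_cong)

lemma orthonormal_expansion_self:
  assumes "orthonormal E" "finite E" "f \<in> E"
  shows "(\<Sum>e\<in>E. cinner e f *s e) = f"
proof -
  have "(\<Sum>e\<in>E. cinner e f *s e) = (\<Sum>e\<in>E. if e = f then e else 0)"
    using assms by (intro sum.cong) (auto simp: orthonormal_cinner)
  then show ?thesis using assms by simp
qed

lemma cinner_expansion_orthogonal: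
  assumes "orthonormal E" "finite E" "f \<in> E"
  shows "cinner f (x - (\<Sum>e\<in>E. cinner e x *s e)) = 0"
  using orthonormal_sum_cinner[OF assms]
  by (simp add: cinner_diff_right cinner_sum_right cinner_scale_right)

lemma orthonormal_insert_normalized:
  assumes ON: "orthonormal E" and w_orth: "\<And>f. f \<in> E \<Longrightarrow> cinner f w = 0" and "w \<noteq> 0"
  defines "e \<equiv> of_real (1 / sqrt (Re (cinner w w))) *s w"
  shows "orthonormal (insert e E)" and "e \<notin> E" and "cinner e w *s e = w"
proof -
  define r where "r = Re (cinner w w)"
  have "0 < r" unfolding r_def using \<open>w \<noteq> 0\<close> by (rule Re_cinner_self_pos)
  have r: "cinner w w = of_real r"
    unfolding r_def cinner_self by simp
  have e: "e = of_real (1 / sqrt r) *s w"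
    unfolding e_def r_def ..
  have e_w: "cinner e w = of_real (sqrt r)"
    using \<open>0 < r\<close> by (simp add: e cinner_scale_left r) (metis of_real_divide real_div_sqrt less_imp_le)
  have e_orth: "cinner f e = 0" "cinner e f = 0" if "f \<in> E" for f
    using w_orth[OF that] cinner_commute[of f e] by (simp_all add: e cinner_scale_right)
  have "cinner e e = of_real (1 / sqrt r) * of_real (sqrt r)"
    unfolding e_w[symmetric] by (subst (2) e) (rule cinner_scale_right)
  then have "cinner e e = 1"
    using \<open>0 < r\<close> by simp
  then show "e \<notin> E" and "orthonormal (insert e E)"
    using ON e_orth by (force simp: orthonormal_def)+
  show "cinner e w *s e = w"
    unfolding e_w using \<open>0 < r\<close> by (subst e) (simp add: vec_eq_iff)
qed

lemma expansion_insert_orthogonal: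
  assumes "finite E" "e \<notin> E" "\<And>f. f \<in> E \<Longrightarrow> cinner e f = 0"
    and a: "a = (\<Sum>f\<in>E. cinner f a *s f)"
  shows "a = (\<Sum>f\<in>insert e E. cinner f a *s f)"
proof -
  have "cinner e a = 0"
    by (subst a) (simp add: cinner_sum_right cinner_scale_right assms(3))
  then show ?thesis
    using assms(1,2) by (simp flip: a)
qed

lemma orthonormal_basis_of_span:
  assumes "finite A"
  shows "\<exists>E. finite E \<and> orthonormal E \<and> E \<subseteq> vec.span A \<and> (\<forall>a\<in>A. a = (\<Sum>e\<in>E. cinner e a *s e))"
  using assms
proof (induction A rule: finite_induct)
  case empty
  show ?case by (intro exI[of _ "{}"]) (simp add: orthonormal_def)
next
  case (insert u A)
  then obtain E where fin: "finite E" and ON: "orthonormal E" and span: "E \<subseteq> vec.span A"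
    and rec: "\<forall>a\<in>A. a = (\<Sum>e\<in>E. cinner e a *s e)"
    by blast
  have span': "E \<subseteq> vec.span (insert u A)"
    using span vec.span_mono[of A "insert u A"] by blast
  define w where "w = u - (\<Sum>e\<in>E. cinner e u *s e)"
  have w_orth: "cinner f w = 0" if "f \<in> E" for f
    unfolding w_def using ON fin that by (rule cinner_expansion_orthogonal)
  show ?case
  proof (cases "w = 0")
    case True
    then show ?thesis
      using fin ON span' rec unfolding w_def by (intro exI[of _ E]) auto
  next
    case False
    define e' where "e' = of_real (1 / sqrt (Re (cinner w w))) *s w"
    have ON': "orthonormal (insert e' E)" and "e' \<notin> E" and e'_w: "cinner e' w *s e' = w"
      using orthonormal_insert_normalized[OF ON w_orth False] unfolding e'_def by blast+
    then have e'_orth: "cinner e' f = 0" if "f \<in> E" for f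
      using that by (auto simp: orthonormal_cinner)
    have "(\<Sum>e\<in>E. cinner e u *s e) \<in> vec.span (insert u A)"
      using span' by (intro vec.span_sum vec.span_scale) blast
    then have "e' \<in> vec.span (insert u A)"
      unfolding e'_def w_def by (intro vec.span_scale vec.span_diff) (simp_all add: vec.span_base)
    moreover have "u = (\<Sum>e\<in>insert e' E. cinner e u *s e)"
    proof -
      have "cinner e' u = cinner e' w"
        unfolding w_def by (simp add: cinner_diff_right cinner_sum_right cinner_scale_right e'_orth)
      then show ?thesis
        using \<open>e' \<notin> E\<close> fin e'_w by (simp add: w_def)
    qed
    moreover have "a = (\<Sum>e\<in>insert e' E. cinner e a *s e)" if "a \<in> A" for a
      using fin \<open>e' \<notin> E\<close> e'_orth rec that by (intro expansion_insert_orthogonal) auto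
    ultimately show ?thesis
      using fin ON' span' by (intro exI[of _ "insert e' E"]) auto
  qed
qed

lemma cinner_eq_0_on_span:
  assumes "\<And>a. a \<in> A \<Longrightarrow> cinner a x = 0" and "y \<in> vec.span A"
  shows "cinner y x = 0"
proof -
  have "vec.subspace {y. cinner y x = 0}"
    by (auto simp: vec.subspace_def cinner_add_left cinner_scale_left)
  then show ?thesis
    using vec.span_minimal[of A "{y. cinner y x = 0}"] assms by auto
qed

lemma orth_proj_onto_span:
  assumes "finite A"
  obtains V where "orth_proj V" and "\<And>a. a \<in> A \<Longrightarrow> V *v a = a"
    and "\<And>x. (\<And>a. a \<in> A \<Longrightarrow> cinner a x = 0) \<Longrightarrow> V *v x = 0"
proof -
  obtain E where fin: "finite E" and ON: "orthonormal E" and span: "E \<subseteq> vec.span A"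
    and rec: "\<forall>a\<in>A. a = (\<Sum>e\<in>E. cinner e a *s e)"
    using orthonormal_basis_of_span[OF assms] by blast
  define V where "V = (\<Sum>e\<in>E. outer e e)"
  have V_apply: "V *v x = (\<Sum>e\<in>E. cinner e x *s e)" for x
    by (simp add: V_def matrix_vector_mult_sum_left outer_mult_vec)
  show ?thesis
  proof (rule that)
    have "V *v f = f" if "f \<in> E" for f
      using ON fin that by (simp add: V_apply orthonormal_expansion_self)
    then have "V ** V = V"
      by (simp add: V_def matrix_mult_sum_right matrix_mult_outer)
    moreover have "adjoint_mat V = V"
      by (simp add: V_def adjoint_mat_def outer_def vec_eq_iff sum_component mult.commute)
    ultimately show "orth_proj V" by (simp add: orth_proj_def)
    show "V *v a = a" if "a \<in> A" for a
      using rec that by (simp add: V_apply)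
    show "V *v x = 0" if "\<And>a. a \<in> A \<Longrightarrow> cinner a x = 0" for x
      using cinner_eq_0_on_span[OF that] span by (simp add: V_apply subset_iff)
  qed
qed

section \<open>The maps G and F\<close>

text \<open>
  The maps \<open>G\<^sub>\<gamma>\<close> and \<open>F\<^sub>\<gamma>\<close> in coordinates; both are characterised by the trace pairing:
  \<open>tr (G\<^sub>\<gamma>(X) B) = tr (\<gamma> (X \<otimes> B)) = tr (X F\<^sub>\<gamma>(B))\<close>.
\<close>

definition G_coord :: "complex^('k \<times> 'm)^('k \<times> 'm) \<Rightarrow> complex^'k^'k \<Rightarrow> complex^'m^'m" where
  "G_coord \<gamma> X = (\<chi> a b. \<Sum>i\<in>UNIV. \<Sum>j\<in>UNIV. \<gamma>$(i, a)$(j, b) * X$j$i)"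

definition F_coord :: "complex^('k \<times> 'm)^('k \<times> 'm) \<Rightarrow> complex^'m^'m \<Rightarrow> complex^'k^'k" where
  "F_coord \<gamma> Y = (\<chi> i j. \<Sum>a\<in>UNIV. \<Sum>b\<in>UNIV. \<gamma>$(i, a)$(j, b) * Y$b$a)"

lemma is_decomp_sum:
  "finite S \<Longrightarrow> \<exists>ds. is_decomp (\<Sum>x\<in>S. kron (A x) (B x)) ds"
proof (induction S rule: finite_induct)
  case empty
  show ?case by (intro exI[of _ "[]"]) (simp add: is_decomp_def)
next
  case (insert x S)
  then obtain ds where "is_decomp (\<Sum>x\<in>S. kron (A x) (B x)) ds" by blast
  then have "is_decomp (\<Sum>x\<in>insert x S. kron (A x) (B x)) ((A x, B x) # ds)"
    using insert.hyps by (simp add: is_decomp_def)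
  then show ?case by blast
qed

lemma is_decomp_exists: "\<exists>ds. is_decomp (\<gamma> :: complex^('k::finite \<times> 'm::finite)^('k \<times> 'm)) ds"
proof -
  define A :: "('k \<times> 'm) \<times> ('k \<times> 'm) \<Rightarrow> complex^'k^'k"
    where "A pq = (\<chi> a b. if a = fst (fst pq) \<and> b = fst (snd pq) then \<gamma>$fst pq$snd pq else 0)" for pq
  define B :: "('k \<times> 'm) \<times> ('k \<times> 'm) \<Rightarrow> complex^'m^'m"
    where "B pq = (\<chi> a b. if a = snd (fst pq) \<and> b = snd (snd pq) then 1 else 0)" for pq
  have "(\<Sum>pq\<in>UNIV. kron (A pq) (B pq))$x$y = (\<Sum>pq\<in>UNIV. if pq = (x, y) then \<gamma>$x$y else 0)" for x y
    unfolding sum_component by (rule sum.cong) (auto simp: A_def B_def kron_def prod_eq_iff)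
  then have "\<gamma> = (\<Sum>pq\<in>UNIV. kron (A pq) (B pq))"
    by (simp add: vec_eq_iff)
  then show ?thesis
    using is_decomp_sum[OF finite, of A B] by simp
qed

lemma G_coord_zero: "G_coord 0 X = 0"
  by (simp add: G_coord_def vec_eq_iff)

lemma F_coord_zero: "F_coord 0 Y = 0"
  by (simp add: F_coord_def vec_eq_iff)

lemma G_coord_add: "G_coord (g + h) X = G_coord g X + G_coord h X"
  by (simp add: G_coord_def vec_eq_iff distrib_right sum.distrib)

lemma F_coord_add: "F_coord (g + h) Y = F_coord g Y + F_coord h Y"
  by (simp add: F_coord_def vec_eq_iff distrib_right sum.distrib)

lemma G_coord_kron: "G_coord (kron A B) X = (\<chi> i j. trace (A ** X) * B$i$j)"
  by (simp add: G_coord_def kron_def vec_eq_iff trace_def matrix_matrix_mult_def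
      sum_distrib_left sum_distrib_right mult_ac)

lemma F_coord_kron: "F_coord (kron A B) Y = (\<chi> i j. trace (B ** Y) * A$i$j)"
  by (simp add: F_coord_def kron_def vec_eq_iff trace_def matrix_matrix_mult_def
      sum_distrib_left sum_distrib_right mult_ac)

lemma G_map_eq_G_coord: "G_map \<gamma> = G_coord \<gamma>"
proof
  fix X
  define ds where "ds = (SOME ds. is_decomp \<gamma> ds)"
  have \<gamma>: "sum_list (map (\<lambda>(A, B). kron A B) ds) = \<gamma>"
    using someI_ex[OF is_decomp_exists[of \<gamma>]] unfolding ds_def is_decomp_def by (rule sym)
  have "G_map \<gamma> X = sum_list (map (\<lambda>(A, B). \<chi> i j. trace (A ** X) * B$i$j) ds)"
    unfolding G_map_def ds_def by simp
  also have "\<dots> = G_coord (sum_list (map (\<lambda>(A, B). kron A B) ds)) X"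
    by (induction ds) (auto simp: G_coord_zero G_coord_add G_coord_kron)
  finally show "G_map \<gamma> X = G_coord \<gamma> X"
    unfolding \<gamma> .
qed

lemma F_map_eq_F_coord: "F_map \<gamma> = F_coord \<gamma>"
proof
  fix Y
  define ds where "ds = (SOME ds. is_decomp \<gamma> ds)"
  have \<gamma>: "sum_list (map (\<lambda>(A, B). kron A B) ds) = \<gamma>"
    using someI_ex[OF is_decomp_exists[of \<gamma>]] unfolding ds_def is_decomp_def by (rule sym)
  have "F_map \<gamma> Y = sum_list (map (\<lambda>(A, B). \<chi> i j. trace (B ** Y) * A$i$j) ds)"
    unfolding F_map_def ds_def by simp
  also have "\<dots> = F_coord (sum_list (map (\<lambda>(A, B). kron A B) ds)) Y"
    by (induction ds) (auto simp: F_coord_zero F_coord_add F_coord_kron)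
  finally show "F_map \<gamma> Y = F_coord \<gamma> Y"
    unfolding \<gamma> .
qed

lemma trace_G_coord: "trace (G_coord \<gamma> X ** B) = trace (\<gamma> ** kron X B)"
proof -
  have "trace (G_coord \<gamma> X ** B)
      = (\<Sum>a\<in>UNIV. \<Sum>b\<in>UNIV. \<Sum>i\<in>UNIV. \<Sum>j\<in>UNIV. \<gamma>$(i, a)$(j, b) * X$j$i * B$b$a)"
    by (simp add: trace_def matrix_matrix_mult_def G_coord_def sum_distrib_right)
  also have "\<dots> = (\<Sum>a\<in>UNIV. \<Sum>i\<in>UNIV. \<Sum>b\<in>UNIV. \<Sum>j\<in>UNIV. \<gamma>$(i, a)$(j, b) * X$j$i * B$b$a)"
    by (intro sum.cong refl sum.swap)
  also have "\<dots> = (\<Sum>i\<in>UNIV. \<Sum>a\<in>UNIV. \<Sum>j\<in>UNIV. \<Sum>b\<in>UNIV. \<gamma>$(i, a)$(j, b) * X$j$i * B$b$a)"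
    by (subst sum.swap) (intro sum.cong refl sum.swap)
  also have "\<dots> = trace (\<gamma> ** kron X B)"
    by (simp add: trace_def matrix_matrix_mult_def kron_def sum_UNIV_prod mult_ac)
  finally show ?thesis .
qed

lemma trace_F_coord: "trace (A ** F_coord \<gamma> Y) = trace (\<gamma> ** kron A Y)"
proof -
  have "trace (A ** F_coord \<gamma> Y)
      = (\<Sum>i\<in>UNIV. \<Sum>j\<in>UNIV. \<Sum>a\<in>UNIV. \<Sum>b\<in>UNIV. A$i$j * \<gamma>$(j, a)$(i, b) * Y$b$a)"
    by (simp add: trace_def matrix_matrix_mult_def F_coord_def sum_distrib_left mult_ac)
  also have "\<dots> = (\<Sum>j\<in>UNIV. \<Sum>a\<in>UNIV. \<Sum>i\<in>UNIV. \<Sum>b\<in>UNIV. A$i$j * \<gamma>$(j, a)$(i, b) * Y$b$a)"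
    by (subst sum.swap) (intro sum.cong refl sum.swap)
  also have "\<dots> = trace (\<gamma> ** kron A Y)"
    by (simp add: trace_def matrix_matrix_mult_def kron_def sum_UNIV_prod mult_ac)
  finally show ?thesis .
qed

lemma trace_mult_matrix_unit:
  "trace (M ** (\<chi> c d. if c = j \<and> d = i then 1 else 0)) = (M::'a::comm_semiring_1^'n^'m)$i$j"
proof -
  have "(M ** (\<chi> c d. if c = j \<and> d = i then 1 else 0))$a$a = (if a = i then M$i$j else 0)" for a
    by (simp add: matrix_matrix_mult_def mult.commute[of "M$_$_"] if_distrib cong: if_cong)
  then show ?thesis by (simp add: trace_def)
qed

lemma matrix_eq_if_trace_mult_eq:
  fixes M N :: "'a::comm_semiring_1^'n^'m"
  assumes "\<And>B. trace (M ** B) = trace (N ** B)"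
  shows "M = N"
proof -
  have "M$i$j = N$i$j" for i j
    using assms[of "\<chi> c d. if c = j \<and> d = i then 1 else 0"] by (simp add: trace_mult_matrix_unit)
  then show ?thesis by (simp add: vec_eq_iff)
qed

lemma G_coord_sandwich:
  "G_coord (kron C D ** \<gamma> ** kron E F) X = D ** G_coord \<gamma> (E ** X ** C) ** F"
proof (rule matrix_eq_if_trace_mult_eq)
  fix B
  have "trace (G_coord (kron C D ** \<gamma> ** kron E F) X ** B)
      = trace (\<gamma> ** (kron E F ** kron X B ** kron C D))"
    unfolding trace_G_coord by (metis matrix_mul_assoc trace_mul_sym)
  also have "\<dots> = trace (G_coord \<gamma> (E ** X ** C) ** (F ** B ** D))"
    by (simp add: kron_mult trace_G_coord)
  also have "\<dots> = trace (D ** G_coord \<gamma> (E ** X ** C) ** F ** B)"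
    by (metis matrix_mul_assoc trace_mul_sym)
  finally show "trace (G_coord (kron C D ** \<gamma> ** kron E F) X ** B)
      = trace (D ** G_coord \<gamma> (E ** X ** C) ** F ** B)" .
qed

lemma F_coord_sandwich:
  "F_coord (kron C D ** \<gamma> ** kron E F) Y = C ** F_coord \<gamma> (F ** Y ** D) ** E"
proof (rule matrix_eq_if_trace_mult_eq)
  fix B
  have "trace (F_coord (kron C D ** \<gamma> ** kron E F) Y ** B)
      = trace (\<gamma> ** (kron E F ** kron B Y ** kron C D))"
    unfolding trace_mul_sym[of _ B] trace_F_coord by (metis matrix_mul_assoc trace_mul_sym)
  also have "\<dots> = trace ((E ** B ** C) ** F_coord \<gamma> (F ** Y ** D))"
    by (simp add: kron_mult trace_F_coord)
  also have "\<dots> = trace (C ** F_coord \<gamma> (F ** Y ** D) ** E ** B)"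
    by (metis matrix_mul_assoc trace_mul_sym)
  finally show "trace (F_coord (kron C D ** \<gamma> ** kron E F) Y ** B)
      = trace (C ** F_coord \<gamma> (F ** Y ** D) ** E ** B)" .
qed

lemma G_coord_compress:
  assumes "kron W (mat 1) ** \<gamma> ** kron W (mat 1) = kron (mat 1) V ** \<gamma>' ** kron (mat 1) V"
  shows "G_coord \<gamma> (W ** X ** W) = V ** G_coord \<gamma>' X ** V"
proof -
  have "G_coord \<gamma> (W ** X ** W) = G_coord (kron W (mat 1) ** \<gamma> ** kron W (mat 1)) X"
    using G_coord_sandwich[of W "mat 1" \<gamma> W "mat 1" X] by simp
  also have "\<dots> = V ** G_coord \<gamma>' X ** V"
    unfolding assms using G_coord_sandwich[of "mat 1" V \<gamma>' "mat 1" V X] by simp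
  finally show ?thesis .
qed

lemma F_coord_compress:
  assumes "kron (mat 1) V ** \<gamma> ** kron (mat 1) V = kron W (mat 1) ** \<gamma>' ** kron W (mat 1)"
  shows "F_coord \<gamma> (V ** Y ** V) = W ** F_coord \<gamma>' Y ** W"
proof -
  have "F_coord \<gamma> (V ** Y ** V) = F_coord (kron (mat 1) V ** \<gamma> ** kron (mat 1) V) Y"
    using F_coord_sandwich[of "mat 1" V \<gamma> "mat 1" V Y] by simp
  also have "\<dots> = W ** F_coord \<gamma>' Y ** W"
    unfolding assms using F_coord_sandwich[of W "mat 1" \<gamma>' W "mat 1" Y] by simp
  finally show ?thesis .
qed

lemma G_coord_outer: "G_coord (outer u u) (outer y y) = outer (partial_cinner y u) (partial_cinner y u)"
  by (simp add: G_coord_def outer_def partial_cinner_def vec_eq_iff sum_product mult_ac)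
    (intro allI, subst sum.swap, simp add: mult_ac)

lemma G_coord_sum_left: "G_coord (sum f S) X = (\<Sum>s\<in>S. G_coord (f s) X)"
  by (induction S rule: infinite_finite_induct) (simp_all add: G_coord_zero G_coord_add)

lemma G_coord_sum_right: "G_coord \<gamma> (sum f S) = (\<Sum>s\<in>S. G_coord \<gamma> (f s))"
  by (induction S rule: infinite_finite_induct)
    (simp_all add: G_coord_def vec_eq_iff distrib_left sum.distrib)

lemma G_coord_gram:
  "G_coord (\<Sum>r\<in>R. outer (v r) (v r)) (\<Sum>l\<in>L. outer (y l) (y l))
     = (\<Sum>p\<in>R \<times> L. outer (partial_cinner (y (snd p)) (v (fst p))) (partial_cinner (y (snd p)) (v (fst p))))"
  unfolding G_coord_sum_left G_coord_sum_right G_coord_outer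
  by (subst sum.swap) (simp add: sum.cartesian_product case_prod_beta)

section \<open>Invariance of compressions\<close>

lemma sandwich_add_null:
  fixes \<gamma> :: "'a::ring_1^'n^'n"
  assumes "\<gamma> ** P = 0" and "P ** \<gamma> = 0"
  shows "(K + P) ** \<gamma> ** (K + P) = K ** \<gamma> ** K"
  using assms by (simp add: matrix_add_ldistrib matrix_add_rdistrib flip: matrix_mul_assoc)

lemma FG_preserves_compression_if_traces_eq_0:
  assumes st: "is_state \<gamma>" and W: "orth_proj W" and V: "orth_proj V"
    and tr1: "trace (\<gamma> ** kron W (perp V)) = 0" and tr2: "trace (\<gamma> ** kron (perp W) V) = 0"
  shows "(F_map \<gamma> \<circ> G_map \<gamma>) ` compression W \<subseteq> compression W"
proof -
  define K where "K = kron W V"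
  define \<gamma>' where "\<gamma>' = K ** \<gamma> ** K"
  \<comment> \<open>Both compressions of \<open>\<gamma>\<close> reduce to \<open>K \<gamma> K\<close>, since \<open>\<gamma>\<close> annihilates the two off-diagonal blocks.\<close>
  have "kron W (mat 1) = K + kron W (perp V)" and "kron (mat 1) V = K + kron (perp W) V"
    by (simp_all add: K_def perp_def kron_diff_left kron_diff_right)
  then have W_cut: "kron W (mat 1) ** \<gamma> ** kron W (mat 1) = \<gamma>'"
    and V_cut: "kron (mat 1) V ** \<gamma> ** kron (mat 1) V = \<gamma>'"
    unfolding \<gamma>'_def using W V
    by (auto intro!: sandwich_add_null state_orth_proj_mult_eq_0_if_trace_eq_0[OF st]
        intro: orth_proj_kron orth_proj_perp simp: tr1 tr2)
  have "kron (mat 1) V ** K = K" "K ** kron (mat 1) V = K"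
    and "kron W (mat 1) ** K = K" "K ** kron W (mat 1) = K"
    using W V by (simp_all add: K_def kron_mult orth_proj_def)
  then have V_fix: "kron (mat 1) V ** \<gamma>' ** kron (mat 1) V = \<gamma>'"
    and W_fix: "kron W (mat 1) ** \<gamma>' ** kron W (mat 1) = \<gamma>'"
    unfolding \<gamma>'_def by (metis matrix_mul_assoc)+
  have "G_coord \<gamma> (W ** X ** W) = V ** G_coord \<gamma>' X ** V" for X
    using W_cut V_fix by (intro G_coord_compress) simp
  moreover have "F_coord \<gamma> (V ** Y ** V) = W ** F_coord \<gamma>' Y ** W" for Y
    using V_cut W_fix by (intro F_coord_compress) simp
  ultimately show ?thesis
    by (auto simp: compression_def G_map_eq_G_coord F_map_eq_F_coord)
qed

lemma trace_perp_G_eq_0_if_FG_preserves_compression: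
  assumes W: "orth_proj W" and inv: "(F_map \<gamma> \<circ> G_map \<gamma>) ` compression W \<subseteq> compression W"
  shows "trace (\<gamma> ** kron (perp W) (G_coord \<gamma> W)) = 0"
proof -
  have "W = W ** mat 1 ** W"
    using W by (simp add: orth_proj_def)
  then have "W \<in> compression W"
    unfolding compression_def by blast
  then obtain Z where "F_coord \<gamma> (G_coord \<gamma> W) = W ** Z ** W"
    using inv by (auto simp: compression_def G_map_eq_G_coord F_map_eq_F_coord)
  moreover have "perp W ** W = 0"
    using W by (simp add: perp_def orth_proj_def matrix_diff_rdistrib)
  ultimately have "trace (perp W ** F_coord \<gamma> (G_coord \<gamma> W)) = 0"
    by (simp add: matrix_mul_assoc trace_def)
  then show ?thesis
    by (simp add: trace_F_coord)
qed

lemma traces_eq_0_if_FG_preserves_compression: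
  assumes st: "is_state \<gamma>" and W: "orth_proj W"
    and inv: "(F_map \<gamma> \<circ> G_map \<gamma>) ` compression W \<subseteq> compression W"
  shows "\<exists>V. orth_proj V \<and> trace (\<gamma> ** kron W (perp V)) = 0 \<and> trace (\<gamma> ** kron (perp W) V) = 0"
proof -
  obtain n v where \<gamma>: "\<gamma> = (\<Sum>r<(n::nat). outer (v r) (v r))"
    using state_gram_decomposition[OF st] by blast
  \<comment> \<open>\<open>G\<^sub>\<gamma>(W)\<close> is the Gram sum of these slices; \<open>V\<close> will project onto their span.\<close>
  define slice where "slice p = partial_cinner (column (snd p) W) (v (fst p))" for p
  have W_herm: "hermitian_mat W" and perp_herm: "hermitian_mat (perp W)"
    using W by (simp_all add: orth_proj_hermitian orth_proj_perp)
  have tr: "trace (\<gamma> ** kron (perp W) (G_coord \<gamma> W)) = 0"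
    using W inv by (rule trace_perp_G_eq_0_if_FG_preserves_compression)
  have "G_coord \<gamma> W = (\<Sum>p\<in>{..<n} \<times> UNIV. outer (slice p) (slice p))"
    unfolding slice_def \<gamma> by (subst (1) orth_proj_gram_columns[OF W]) (rule G_coord_gram)
  then have "kron (perp W) (G_coord \<gamma> W) = (\<Sum>p\<in>UNIV \<times> ({..<n} \<times> UNIV).
      outer (tensor (column (fst p) (perp W)) (slice (snd p))) (tensor (column (fst p) (perp W)) (slice (snd p))))"
    by (subst (1) orth_proj_gram_columns[OF orth_proj_perp[OF W]]) (simp add: kron_gram)
  then have "cinner (tensor (column i (perp W)) (slice q)) (v r) = 0"
    if "q \<in> {..<n} \<times> UNIV" "r < n" for i q r
    using tr that cinner_eq_0_if_trace_gram_mult_gram_eq_0[of "{..<n}" "UNIV \<times> ({..<n} \<times> UNIV)" v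
        "\<lambda>p. tensor (column (fst p) (perp W)) (slice (snd p))" r "(i, q)"]
    by (simp add: \<gamma>)
  then have slice_orth: "cinner a (partial_cinner (column i (perp W)) (v r)) = 0"
    if "a \<in> slice ` ({..<n} \<times> UNIV)" "r < n" for a i r
    using that by (auto simp: cinner_partial_cinner)
  have "finite (slice ` ({..<n} \<times> UNIV))" by simp
  then obtain V where V: "orth_proj V" and V_fix: "\<And>a. a \<in> slice ` ({..<n} \<times> UNIV) \<Longrightarrow> V *v a = a"
    and V_kill: "\<And>x. (\<And>a. a \<in> slice ` ({..<n} \<times> UNIV) \<Longrightarrow> cinner a x = 0) \<Longrightarrow> V *v x = 0"
    using orth_proj_onto_span by blast
  have "kron W (perp V) *v v r = 0" if "r < n" for r
  proof -
    have "V *v slice (r, i) = slice (r, i)" for i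
      using V_fix that by simp
    then show ?thesis
      by (simp add: kron_mult_vec_eq_0_iff[OF W_herm] perp_def matrix_vector_mult_diff_rdistrib slice_def)
  qed
  moreover have "kron (perp W) V *v v r = 0" if "r < n" for r
    using that slice_orth unfolding kron_mult_vec_eq_0_iff[OF perp_herm] by (simp add: V_kill)
  ultimately have "\<gamma> ** kron W (perp V) = 0" and "\<gamma> ** kron (perp W) V = 0"
    unfolding \<gamma> using V W
    by (auto intro!: gram_mult_eq_0 orth_proj_hermitian orth_proj_kron orth_proj_perp)
  then show ?thesis
    using V by (intro exI[of _ V]) (simp add: trace_def)
qed

theorem mainTheorem2:
  fixes \<gamma> :: "complex^('k::finite \<times> 'm::finite)^('k \<times> 'm)"
    and W :: "complex^'k^'k"
  assumes "is_state \<gamma>"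
    and "orth_proj W"
  shows "((F_map \<gamma> \<circ> G_map \<gamma>) ` compression W \<subseteq> compression W) \<longleftrightarrow>
         (\<exists>V :: complex^'m^'m. orth_proj V \<and>
            trace (\<gamma> ** kron W (perp V)) = 0 \<and> trace (\<gamma> ** kron (perp W) V) = 0)"
  using traces_eq_0_if_FG_preserves_compression[OF assms]
    FG_preserves_compression_if_traces_eq_0[OF assms]
  by blast

end
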